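(* Fix integers $w\ge1$ and $m\ge0$. Let $\phi:W\to W$ be a linear map with $\phi(b^i_j)=\lambda^b_jb^i_{j+w}$, $\phi(c^i_j)=\mu^c_jc^i_{j+w}$, $\phi(\beta^i_j)=\lambda^\beta_j\beta^i_{j+w}$, $\phi(\gamma^i_j)=\mu^\gamma_j\gamma^i_{j+w}$ for all $i=1,\dots,n$ and $j\ge0$, where the constants $\lambda^b_j,\mu^c_j,\lambda^\beta_j,\mu^\gamma_j\in\mathbb C$ do not depend on $i$. Then the restriction $\phi|_{W_m}$ can be expressed uniquely as a linear combination of the operators $j^{0,k}(k-w)|_{W_m}$ and $j^{1,k}(k-w)|_{W_m}$ with $0\le k-w\le 2m+1$.
   Context: Let $\mathcal F$ be the rank $n$ $bc\beta\gamma$-system: the vertex superalgebra with even generators $\beta^i,\gamma^i$ and odd generators $b^i,c^i$ ($1\le i\le n$), with nonregular OPEs $\beta^i(z)\gamma^j(w)\sim\delta_{ij}(z-w)^{-1}$, $\gamma^i(z)\beta^j(w)\sim-\delta_{ij}(z-w)^{-1}$, $b^i(z)c^j(w)\sim\delta_{ij}(z-w)^{-1}$, $c^i(z)b^j(w)\sim\delta_{ij}(z-w)^{-1}$. Filter $\mathcal F$ by letting $\mathcal F_{(d)}$ be the span of iterated Wick products of the generators and their derivatives of length at most $d$. The associated graded $\mathrm{gr}(\mathcal F)$ is the free supercommutative algebra on even variables $\beta^i_j,\gamma^i_j$ and odd variables $b^i_j,c^i_j$ ($1\le i\le n$, $j\ge0$), the images of $\partial^j\beta^i,\partial^j\gamma^i,\partial^jb^i,\partial^jc^i$.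 Let $W\subset\mathrm{gr}(\mathcal F)$ be the span of all $b^i_j,c^i_j,\beta^i_j,\gamma^i_j$ ($j\ge0$) and $W_m$ the span of those with $j\le m$. For an element $\omega\in\mathcal F_{(2)}$ and $r\ge0$, the operator $\omega\circ_r$ induces a derivation of degree $0$ on $\mathrm{gr}(\mathcal F)$, denoted $\omega(r)$. Set $j^{0,k}=-\sum_{i=1}^n:b^i\partial^kc^i:$ and $j^{1,k}=\sum_{i=1}^n:\beta^i\partial^k\gamma^i:$; for $k-w\ge0$ the derivations $j^{0,k}(k-w)$ and $j^{1,k}(k-w)$ map $W$ into $W$. *)

theory Defs
  imports Complex_Main
begin

text \<open>Generators of gr(F) of degree one: type (b, c, beta, gamma), colour index i, derivative order j.\<close>
datatype gen = Gb | Gc | Gbeta | Ggamma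

type_synonym idx = "gen \<times> nat \<times> nat"
type_synonym vec = "idx \<Rightarrow> complex"

definition valid_idx :: "nat \<Rightarrow> idx \<Rightarrow> bool" where
  "valid_idx n x = (case x of (g, i, j) \<Rightarrow> 1 \<le> i \<and> i \<le> n)"

definition Wsp :: "nat \<Rightarrow> vec set" where
  "Wsp n = {v. finite {x. v x \<noteq> 0} \<and> (\<forall>x. v x \<noteq> 0 \<longrightarrow> valid_idx n x)}"

definition Wm :: "nat \<Rightarrow> nat \<Rightarrow> vec set" where
  "Wm n m = {v \<in> Wsp n. \<forall>g i j. v (g, i, j) \<noteq> 0 \<longrightarrow> j \<le> m}"

definition bas :: "idx \<Rightarrow> vec" where
  "bas x = (\<lambda>y. if y = x then 1 else 0)"

definition lin_ext :: "(idx \<Rightarrow> vec) \<Rightarrow> vec \<Rightarrow> vec" where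
  "lin_ext f v = (\<lambda>y. \<Sum>x\<in>{x. v x \<noteq> 0}. v x * f x y)"

text \<open>Action of omega(r) on generators, computed from the OPEs, for
  omega = j^{0,k} = - sum_i :b^i d^k c^i: and omega = j^{1,k} = sum_i :beta^i d^k gamma^i:.\<close>
definition coef_lower :: "nat \<Rightarrow> nat \<Rightarrow> nat \<Rightarrow> complex" where
  "coef_lower k r j = (if r \<le> j then of_nat (fact j) / of_nat (fact (j - r)) else 0)"

definition coef_upper :: "nat \<Rightarrow> nat \<Rightarrow> nat \<Rightarrow> complex" where
  "coef_upper k r j = (if r \<le> k + j then (-1) ^ (k + 1) * of_nat (fact (k + j)) / of_nat (fact (k + j - r)) else 0)"

definition J0 :: "nat \<Rightarrow> nat \<Rightarrow> idx \<Rightarrow> vec" where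
  "J0 k r x = (case x of
      (Gb, i, j) \<Rightarrow> (\<lambda>y. coef_upper k r j * bas (Gb, i, k + j - r) y)
    | (Gc, i, j) \<Rightarrow> (\<lambda>y. coef_lower k r j * bas (Gc, i, j + k - r) y)
    | _ \<Rightarrow> (\<lambda>y. 0))"

definition J1 :: "nat \<Rightarrow> nat \<Rightarrow> idx \<Rightarrow> vec" where
  "J1 k r x = (case x of
      (Gbeta, i, j) \<Rightarrow> (\<lambda>y. coef_upper k r j * bas (Gbeta, i, k + j - r) y)
    | (Ggamma, i, j) \<Rightarrow> (\<lambda>y. coef_lower k r j * bas (Ggamma, i, j + k - r) y)
    | _ \<Rightarrow> (\<lambda>y. 0))"

definition jder0 :: "nat \<Rightarrow> nat \<Rightarrow> vec \<Rightarrow> vec" where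
  "jder0 k r = lin_ext (J0 k r)"

definition jder1 :: "nat \<Rightarrow> nat \<Rightarrow> vec \<Rightarrow> vec" where
  "jder1 k r = lin_ext (J1 k r)"

end

theory Submission
  imports Defs "Jordan_Normal_Form.Determinant" "HOL-Computational_Algebra.Polynomial"
begin

(*
  phi and the operators j^{0,r+w}(r), j^{1,r+w}(r) all send a generator x^i_j to a multiple of
  x^i_{j+w}, with factors independent of i. So a combination with coefficients a_r, a'_r agrees
  with phi on W_m iff two decoupled scalar systems hold: 2m+2 equations in a_0, ..., a_{2m+1}
  coming from c_j and b_j (j <= m), and the same system in a' coming from gamma_j and beta_j.

  The coefficients of this square system are values of the falling factorials
  x(x-1)...(x-r+1): at x = j for c_j, and up to the sign (-1)^(w+1) at x = -(w+j+1) for b_j.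
  A combination of falling factorials of order at most 2m+1 is a polynomial of degree at most
  2m+1, and a vanishing one has zero coefficients (evaluate at 0, 1, 2, ...). A solution of the
  homogeneous system vanishes at the 2m+2 distinct points 0..m and -(w+1)..-(w+m+1), hence is
  trivial, and the square system is uniquely solvable.
*)

(* Jordan_Normal_Form's vector type would otherwise shadow the type vec of Defs. *)
hide_type (open) Matrix.vec

lemma square_system_solvable_if_injective:
  fixes M :: "nat \<Rightarrow> nat \<Rightarrow> 'a :: field"
  assumes inj: "\<And>a r. (\<forall>k<d. (\<Sum>s<d. a s * M k s) = 0) \<Longrightarrow> r < d \<Longrightarrow> a r = 0"
  shows "\<exists>a. \<forall>k<d. (\<Sum>r<d. a r * M k r) = y k"
proof -
  define A where "A = mat d d (\<lambda>(k, r). M k r)"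
  have A: "A \<in> carrier_mat d d" by (simp add: A_def)
  have A_mult: "(A *\<^sub>v v) $ k = (\<Sum>r<d. v $ r * M k r)" if "v \<in> carrier_vec d" "k < d" for v k
    using that by (simp add: A_def scalar_prod_def atLeast0LessThan mult.commute)
  have "det A \<noteq> 0"
  proof
    assume "det A = 0"
    then obtain v where v: "v \<in> carrier_vec d" "v \<noteq> 0\<^sub>v d" "A *\<^sub>v v = 0\<^sub>v d"
      using det_0_iff_vec_prod_zero[OF A] by auto
    have "\<forall>k<d. (\<Sum>s<d. v $ s * M k s) = 0"
      using A_mult[OF v(1), symmetric] v(3) by simp
    then have "v $ r = 0" if "r < d" for r
      using inj that by blast
    with v show False by (auto intro: eq_vecI)
  qed
  then obtain B where B: "B \<in> carrier_mat d d" "A * B = 1\<^sub>m d"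
    using det_non_zero_imp_unit[OF A, of undefined] by (auto simp: Units_def ring_mat_def)
  define x where "x = B *\<^sub>v vec d y"
  have x: "x \<in> carrier_vec d" using B by (simp add: x_def)
  have "A *\<^sub>v x = vec d y"
    using A B by (simp add: x_def assoc_mult_mat_vec[symmetric])
  then show ?thesis using A_mult[OF x] by (metis index_vec)
qed

definition falling_poly :: "nat \<Rightarrow> 'a :: comm_ring_1 poly" where
  "falling_poly r = (\<Prod>i<r. [:- of_nat i, 1:])"

lemma falling_poly_Suc: "falling_poly (Suc r) = falling_poly r * [:- of_nat r, 1:]"
  unfolding falling_poly_def by (rule prod.lessThan_Suc)

lemma degree_falling_poly_le: "degree (falling_poly r :: 'a :: comm_ring_1 poly) \<le> r"
  unfolding falling_poly_def
  by (rule order.trans[OF degree_prod_sum_le]) (simp_all add: o_def)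

lemma poly_falling_poly_of_nat:
  "poly (falling_poly r) (of_nat j :: 'a :: field_char_0) = (if r \<le> j then fact j / fact (j - r) else 0)"
proof (induction r)
  case (Suc r)
  show ?case
  proof (cases "Suc r \<le> j")
    case True
    then have "fact (j - r) = (of_nat (j - r) :: 'a) * fact (j - Suc r)"
      by (metis Suc_diff_Suc Suc_le_lessD fact_Suc)
    with True Suc show ?thesis by (simp add: falling_poly_Suc of_nat_diff field_simps)
  qed (use Suc in \<open>auto simp: falling_poly_Suc\<close>)
qed (simp add: falling_poly_def)

lemma poly_falling_poly_neg:
  "poly (falling_poly r) (- of_nat (s + 1) :: 'a :: field_char_0) = (-1) ^ r * fact (s + r) / fact s"
proof (induction r)
  case (Suc r)
  have "poly (falling_poly (Suc r)) (- of_nat (s + 1) :: 'a)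
      = (-1) ^ r * fact (s + r) / fact s * (- of_nat (s + r + 1))"
    unfolding falling_poly_Suc poly_mult Suc.IH by simp
  also have "\<dots> = (-1) ^ Suc r * fact (s + Suc r) / fact s"
    by (simp add: algebra_simps)
  finally show ?case .
qed (simp add: falling_poly_def)

lemma coef_lower_eq_poly_falling_poly: "coef_lower k r j = poly (falling_poly r) (of_nat j)"
  by (simp add: coef_lower_def poly_falling_poly_of_nat)

lemma coef_upper_eq_poly_falling_poly:
  "coef_upper (r + w) r j = (-1) ^ (w + 1) * poly (falling_poly r) (- of_nat (w + j + 1))"
  unfolding poly_falling_poly_neg coef_upper_def by (simp add: power_add algebra_simps)

lemma falling_poly_linear_independent:
  fixes a :: "nat \<Rightarrow> 'a :: field_char_0"
  assumes "(\<Sum>r\<le>N. smult (a r) (falling_poly r)) = 0"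
  shows "r \<le> N \<Longrightarrow> a r = 0"
proof (induction r rule: less_induct)
  case (less r)
  have "0 = (\<Sum>s\<le>N. a s * poly (falling_poly s) (of_nat r :: 'a))"
    using arg_cong[OF assms, of "\<lambda>p. poly p (of_nat r)"] by (simp add: poly_sum)
  also have "\<dots> = (\<Sum>s\<le>N. if s = r then a r * fact r else 0)"
    using less by (intro sum.cong) (auto simp: poly_falling_poly_of_nat)
  also have "\<dots> = a r * fact r" using less.prems by simp
  finally show ?case by simp
qed

lemma falling_system_injective:
  fixes a :: "nat \<Rightarrow> complex"
  assumes lower: "\<forall>j\<le>m. (\<Sum>r\<le>2 * m + 1. a r * coef_lower (r + w) r j) = 0"
    and upper: "\<forall>j\<le>m. (\<Sum>r\<le>2 * m + 1. a r * coef_upper (r + w) r j) = 0"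
    and "r \<le> 2 * m + 1"
  shows "a r = 0"
proof -
  define p where "p = (\<Sum>r\<le>2 * m + 1. smult (a r) (falling_poly r))"
  have poly_p: "poly p x = (\<Sum>r\<le>2 * m + 1. a r * poly (falling_poly r) x)" for x
    by (simp add: p_def poly_sum)
  have "degree p \<le> 2 * m + 1"
    unfolding p_def
  proof (rule degree_sum_le)
    fix r
    show "degree (smult (a r) (falling_poly r)) \<le> 2 * m + 1" if "r \<in> {..2 * m + 1}"
      using that by (intro order.trans[OF degree_smult_le] order.trans[OF degree_falling_poly_le]) simp
  qed simp
  define A where "A = (of_nat ` {..m} \<union> (\<lambda>j. - of_nat (w + j + 1)) ` {..m} :: complex set)"
  have "card A = 2 * m + 2"
  proof -
    have "(of_nat i :: complex) \<noteq> - of_nat (w + j + 1)" for i j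
      unfolding eq_neg_iff_add_eq_0 of_nat_add[symmetric] of_nat_eq_0_iff by simp
    then have "of_nat ` {..m} \<inter> (\<lambda>j. - of_nat (w + j + 1)) ` {..m} = ({} :: complex set)"
      by blast
    then show ?thesis
      unfolding A_def by (subst card_Un_disjoint) (auto simp: card_image inj_on_def)
  qed
  moreover have "poly p x = 0" if "x \<in> A" for x
  proof -
    consider (lower) j where "j \<le> m" "x = of_nat j" | (upper) j where "j \<le> m" "x = - of_nat (w + j + 1)"
      using \<open>x \<in> A\<close> unfolding A_def by auto
    then show ?thesis
    proof cases
      case lower
      then show ?thesis using assms(1) by (simp add: poly_p coef_lower_eq_poly_falling_poly)
    next
      case upper
      have "(-1) ^ (w + 1) * poly p x = (\<Sum>r\<le>2 * m + 1. a r * coef_upper (r + w) r j)"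
        unfolding poly_p sum_distrib_left coef_upper_eq_poly_falling_poly upper(2)
        by (simp add: algebra_simps)
      then show ?thesis using assms(2) upper(1) by simp
    qed
  qed
  ultimately have "p = 0"
    using \<open>degree p \<le> 2 * m + 1\<close> by (intro poly_eqI_degree[of A]) auto
  then show ?thesis
    using falling_poly_linear_independent assms(3) unfolding p_def by blast
qed

definition solves_falling_system :: "nat \<Rightarrow> nat \<Rightarrow> (nat \<Rightarrow> complex) \<Rightarrow> (nat \<Rightarrow> complex) \<Rightarrow> (nat \<Rightarrow> complex) \<Rightarrow> bool" where
  "solves_falling_system m w C B a \<longleftrightarrow> (\<forall>r>2 * m + 1. a r = 0) \<and>
     (\<forall>j\<le>m. C j = (\<Sum>r\<le>2 * m + 1. a r * coef_lower (r + w) r j) \<and>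
             B j = (\<Sum>r\<le>2 * m + 1. a r * coef_upper (r + w) r j))"

lemma falling_system_solvable: "\<exists>a. solves_falling_system m w C B a"
proof -
  define d where "d = 2 * m + 2"
  define M where "M k r = (if k \<le> m then coef_lower (r + w) r k else coef_upper (r + w) r (k - Suc m))"
    for k r
  have rows: "(\<Sum>r<d. a r * M j r) = (\<Sum>r\<le>2 * m + 1. a r * coef_lower (r + w) r j)"
    "(\<Sum>r<d. a r * M (j + Suc m) r) = (\<Sum>r\<le>2 * m + 1. a r * coef_upper (r + w) r j)"
    if "j \<le> m" for a j
    using that by (simp_all add: M_def d_def lessThan_Suc_atMost[symmetric])
  have lt: "j < d" "j + Suc m < d" if "j \<le> m" for j
    using that by (simp_all add: d_def)
  have "\<exists>a. \<forall>k<d. (\<Sum>r<d. a r * M k r) = (if k \<le> m then C k else B (k - Suc m))"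
  proof (rule square_system_solvable_if_injective)
    fix a r assume a: "\<forall>k<d. (\<Sum>s<d. a s * M k s) = 0" and "r < d"
    have "(\<Sum>r\<le>2 * m + 1. a r * coef_lower (r + w) r j) = 0"
      "(\<Sum>r\<le>2 * m + 1. a r * coef_upper (r + w) r j) = 0" if "j \<le> m" for j
      unfolding rows[OF that, symmetric] using a lt[OF that] by simp_all
    with \<open>r < d\<close> show "a r = 0"
      by (intro falling_system_injective[of m a w]) (auto simp: d_def)
  qed
  then obtain a where a: "\<forall>k<d. (\<Sum>r<d. a r * M k r) = (if k \<le> m then C k else B (k - Suc m))" ..
  define a' where "a' r = (if r \<le> 2 * m + 1 then a r else 0)" for r
  have a': "(\<Sum>r\<le>2 * m + 1. a' r * f r) = (\<Sum>r\<le>2 * m + 1. a r * f r)" for f :: "nat \<Rightarrow> complex"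
    by (intro sum.cong) (auto simp: a'_def)
  show ?thesis
    unfolding solves_falling_system_def
  proof (intro exI conjI allI impI)
    fix j assume "j \<le> m"
    then show "C j = (\<Sum>r\<le>2 * m + 1. a' r * coef_lower (r + w) r j)"
      and "B j = (\<Sum>r\<le>2 * m + 1. a' r * coef_upper (r + w) r j)"
      unfolding a' rows[OF \<open>j \<le> m\<close>, symmetric] using a lt[OF \<open>j \<le> m\<close>] by simp_all
  qed (simp add: a'_def)
qed

lemma falling_system_unique_solution: "\<exists>!a. solves_falling_system m w C B a"
proof (rule ex_ex1I)
  fix a a' assume a: "solves_falling_system m w C B a" and a': "solves_falling_system m w C B a'"
  have "a r - a' r = 0" if "r \<le> 2 * m + 1" for r
    using a a' that unfolding solves_falling_system_def
    by (intro falling_system_injective[of m "\<lambda>r. a r - a' r" w])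
       (simp_all add: left_diff_distrib sum_subtractf)
  with a a' show "a = a'"
    unfolding solves_falling_system_def by (metis eq_iff_diff_eq_0 ext not_le)
qed (fact falling_system_solvable)

lemma lin_ext_bas [simp]: "lin_ext f (bas x) = f x"
proof -
  have "{y. bas x y \<noteq> 0} = {x}" by (auto simp: bas_def)
  then show ?thesis by (simp add: lin_ext_def bas_def)
qed

lemma bas_in_Wm: "valid_idx n (g, i, j) \<Longrightarrow> j \<le> m \<Longrightarrow> bas (g, i, j) \<in> Wm n m"
  by (auto simp: Wm_def Wsp_def bas_def)

lemma linear_expansion_in_bas:
  assumes add: "\<forall>u\<in>Wsp n. \<forall>v\<in>Wsp n. phi (\<lambda>x. u x + v x) = (\<lambda>x. phi u x + phi v x)"
    and scale: "\<forall>c. \<forall>v\<in>Wsp n. phi (\<lambda>x. c * v x) = (\<lambda>x. c * phi v x)"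
    and "finite S" "\<forall>x\<in>S. valid_idx n x" "{x. v x \<noteq> 0} \<subseteq> S"
  shows "phi v = (\<lambda>y. \<Sum>x\<in>S. v x * phi (bas x) y)"
  using assms(3-)
proof (induction S arbitrary: v rule: finite_induct)
  case empty
  have "(\<lambda>_. 0) \<in> Wsp n" by (simp add: Wsp_def)
  then have "phi (\<lambda>_. 0) = (\<lambda>_. 0)" using scale[rule_format, of "\<lambda>_. 0" 0] by simp
  moreover from empty have "v = (\<lambda>_. 0)" by auto
  ultimately show ?case by simp
next
  case (insert s S)
  have in_Wsp: "v(s := 0) \<in> Wsp n" "bas s \<in> Wsp n" "(\<lambda>y. v s * bas s y) \<in> Wsp n"
    using insert by (auto simp: Wsp_def bas_def intro: finite_subset)
  have "phi (\<lambda>y. (v(s := 0)) y + v s * bas s y)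
      = (\<lambda>y. phi (v(s := 0)) y + phi (\<lambda>y. v s * bas s y) y)"
    using add[rule_format, OF in_Wsp(1) in_Wsp(3)] by simp
  moreover have "(\<lambda>y. (v(s := 0)) y + v s * bas s y) = v" by (auto simp: bas_def)
  ultimately have "phi v = (\<lambda>y. phi (v(s := 0)) y + phi (\<lambda>y. v s * bas s y) y)"
    by simp
  also have "phi (\<lambda>y. v s * bas s y) = (\<lambda>y. v s * phi (bas s) y)"
    using scale in_Wsp by simp
  also have "phi (v(s := 0)) = (\<lambda>y. \<Sum>x\<in>S. v x * phi (bas x) y)"
    using insert by (subst insert.IH) (auto intro!: sum.cong)
  finally show ?case using insert.hyps by (simp add: add.commute)
qed

lemma linear_eq_lin_ext_on_Wm_iff:
  assumes add: "\<forall>u\<in>Wsp n. \<forall>v\<in>Wsp n. phi (\<lambda>x. u x + v x) = (\<lambda>x. phi u x + phi v x)"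
    and scale: "\<forall>c. \<forall>v\<in>Wsp n. phi (\<lambda>x. c * v x) = (\<lambda>x. c * phi v x)"
  shows "(\<forall>v\<in>Wm n m. phi v = lin_ext f v) \<longleftrightarrow>
         (\<forall>g i j. valid_idx n (g, i, j) \<and> j \<le> m \<longrightarrow> phi (bas (g, i, j)) = f (g, i, j))"
proof
  assume "\<forall>v\<in>Wm n m. phi v = lin_ext f v"
  then show "\<forall>g i j. valid_idx n (g, i, j) \<and> j \<le> m \<longrightarrow> phi (bas (g, i, j)) = f (g, i, j)"
    using bas_in_Wm by fastforce
next
  assume on_bas: "\<forall>g i j. valid_idx n (g, i, j) \<and> j \<le> m \<longrightarrow> phi (bas (g, i, j)) = f (g, i, j)"
  show "\<forall>v\<in>Wm n m. phi v = lin_ext f v"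
  proof
    fix v assume v: "v \<in> Wm n m"
    then have supp: "finite {x. v x \<noteq> 0}" "\<forall>x\<in>{x. v x \<noteq> 0}. valid_idx n x"
      by (auto simp: Wm_def Wsp_def)
    have "phi v = (\<lambda>y. \<Sum>x\<in>{x. v x \<noteq> 0}. v x * phi (bas x) y)"
      using linear_expansion_in_bas[OF add scale supp] by simp
    also have "\<dots> = lin_ext f v"
      unfolding lin_ext_def using v supp(2) on_bas by (auto simp: Wm_def intro!: sum.cong)
    finally show "phi v = lin_ext f v" .
  qed
qed

definition jcomb :: "nat \<Rightarrow> nat \<Rightarrow> (nat \<Rightarrow> complex) \<Rightarrow> (nat \<Rightarrow> complex) \<Rightarrow> idx \<Rightarrow> vec" where
  "jcomb N w a0 a1 x = (\<lambda>y. \<Sum>r\<le>N. a0 r * J0 (r + w) r x y + a1 r * J1 (r + w) r x y)"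

lemma sum_jder_eq_lin_ext_jcomb:
  "(\<lambda>y. \<Sum>r\<le>N. a0 r * jder0 (r + w) r v y + a1 r * jder1 (r + w) r v y) = lin_ext (jcomb N w a0 a1) v"
  unfolding jder0_def jder1_def lin_ext_def jcomb_def
  by (simp add: sum_distrib_left sum.distrib[symmetric] algebra_simps sum.swap[of _ "{..N}"])

lemma jcomb_bas:
  "jcomb N w a0 a1 (Gc, i, j) = (\<lambda>y. (\<Sum>r\<le>N. a0 r * coef_lower (r + w) r j) * bas (Gc, i, j + w) y)"
  "jcomb N w a0 a1 (Gb, i, j) = (\<lambda>y. (\<Sum>r\<le>N. a0 r * coef_upper (r + w) r j) * bas (Gb, i, j + w) y)"
  "jcomb N w a0 a1 (Ggamma, i, j) = (\<lambda>y. (\<Sum>r\<le>N. a1 r * coef_lower (r + w) r j) * bas (Ggamma, i, j + w) y)"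
  "jcomb N w a0 a1 (Gbeta, i, j) = (\<lambda>y. (\<Sum>r\<le>N. a1 r * coef_upper (r + w) r j) * bas (Gbeta, i, j + w) y)"
  unfolding jcomb_def J0_def J1_def by (simp_all add: sum_distrib_right add.commute mult.assoc)

lemma scaled_bas_eq_iff: "(\<lambda>y. c * bas x y) = (\<lambda>y. d * bas x y) \<longleftrightarrow> c = d"
  by (metis bas_def mult_cancel_left1 mult_cancel_right1)

lemma represents_on_Wm_iff:
  assumes n: "n \<ge> 1"
    and add: "\<forall>u\<in>Wsp n. \<forall>v\<in>Wsp n. phi (\<lambda>x. u x + v x) = (\<lambda>x. phi u x + phi v x)"
    and scale: "\<forall>c. \<forall>v\<in>Wsp n. phi (\<lambda>x. c * v x) = (\<lambda>x. c * phi v x)"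
    and phi_b: "\<forall>i j. 1 \<le> i \<and> i \<le> n \<longrightarrow> phi (bas (Gb, i, j)) = (\<lambda>x. lb j * bas (Gb, i, j + w) x)"
    and phi_c: "\<forall>i j. 1 \<le> i \<and> i \<le> n \<longrightarrow> phi (bas (Gc, i, j)) = (\<lambda>x. mc j * bas (Gc, i, j + w) x)"
    and phi_beta: "\<forall>i j. 1 \<le> i \<and> i \<le> n \<longrightarrow> phi (bas (Gbeta, i, j)) = (\<lambda>x. lbeta j * bas (Gbeta, i, j + w) x)"
    and phi_gamma: "\<forall>i j. 1 \<le> i \<and> i \<le> n \<longrightarrow> phi (bas (Ggamma, i, j)) = (\<lambda>x. mgamma j * bas (Ggamma, i, j + w) x)"
  shows "(\<forall>v\<in>Wm n m. phi v = (\<lambda>x. \<Sum>r\<le>N. a0 r * jder0 (r + w) r v x + a1 r * jder1 (r + w) r v x))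
    \<longleftrightarrow> (\<forall>j\<le>m. mc j = (\<Sum>r\<le>N. a0 r * coef_lower (r + w) r j) \<and> lb j = (\<Sum>r\<le>N. a0 r * coef_upper (r + w) r j))
      \<and> (\<forall>j\<le>m. mgamma j = (\<Sum>r\<le>N. a1 r * coef_lower (r + w) r j) \<and> lbeta j = (\<Sum>r\<le>N. a1 r * coef_upper (r + w) r j))"
    (is "_ \<longleftrightarrow> ?coefs")
proof -
  have "(\<forall>v\<in>Wm n m. phi v = (\<lambda>x. \<Sum>r\<le>N. a0 r * jder0 (r + w) r v x + a1 r * jder1 (r + w) r v x))
    \<longleftrightarrow> (\<forall>g i j. valid_idx n (g, i, j) \<and> j \<le> m \<longrightarrow> phi (bas (g, i, j)) = jcomb N w a0 a1 (g, i, j))"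
    unfolding sum_jder_eq_lin_ext_jcomb by (rule linear_eq_lin_ext_on_Wm_iff[OF add scale])
  also have "\<dots> \<longleftrightarrow> ?coefs"
  proof
    assume on_bas: "\<forall>g i j. valid_idx n (g, i, j) \<and> j \<le> m \<longrightarrow> phi (bas (g, i, j)) = jcomb N w a0 a1 (g, i, j)"
    show ?coefs
    proof (intro conjI allI impI)
      fix j assume "j \<le> m"
      then have on_bas1: "phi (bas (g, 1, j)) = jcomb N w a0 a1 (g, 1, j)" for g
        using on_bas n by (simp add: valid_idx_def)
      show "mc j = (\<Sum>r\<le>N. a0 r * coef_lower (r + w) r j)"
        using on_bas1[of Gc] phi_c n by (simp add: jcomb_bas scaled_bas_eq_iff)
      show "lb j = (\<Sum>r\<le>N. a0 r * coef_upper (r + w) r j)"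
        using on_bas1[of Gb] phi_b n by (simp add: jcomb_bas scaled_bas_eq_iff)
      show "mgamma j = (\<Sum>r\<le>N. a1 r * coef_lower (r + w) r j)"
        using on_bas1[of Ggamma] phi_gamma n by (simp add: jcomb_bas scaled_bas_eq_iff)
      show "lbeta j = (\<Sum>r\<le>N. a1 r * coef_upper (r + w) r j)"
        using on_bas1[of Gbeta] phi_beta n by (simp add: jcomb_bas scaled_bas_eq_iff)
    qed
  next
    assume ?coefs
    show "\<forall>g i j. valid_idx n (g, i, j) \<and> j \<le> m \<longrightarrow> phi (bas (g, i, j)) = jcomb N w a0 a1 (g, i, j)"
    proof (intro allI impI)
      fix g i j assume "valid_idx n (g, i, j) \<and> j \<le> m"
      with \<open>?coefs\<close> show "phi (bas (g, i, j)) = jcomb N w a0 a1 (g, i, j)"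
        using phi_b phi_c phi_beta phi_gamma
        by (cases g) (simp_all add: valid_idx_def jcomb_bas scaled_bas_eq_iff)
    qed
  qed
  finally show ?thesis .
qed

lemma ex1_pair: "\<exists>!x. P x \<Longrightarrow> \<exists>!y. Q y \<Longrightarrow> \<exists>!p. P (fst p) \<and> Q (snd p)"
  by (metis fst_conv prod.collapse snd_conv)

theorem mainTheorem7:
  fixes n w m :: nat
    and phi :: "vec \<Rightarrow> vec"
    and lb mc lbeta mgamma :: "nat \<Rightarrow> complex"
  assumes n: "n \<ge> 1"
    and w: "w \<ge> 1"
    and phi_W: "\<forall>v\<in>Wsp n. phi v \<in> Wsp n"
    and phi_add: "\<forall>u\<in>Wsp n. \<forall>v\<in>Wsp n. phi (\<lambda>x. u x + v x) = (\<lambda>x. phi u x + phi v x)"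
    and phi_scale: "\<forall>c. \<forall>v\<in>Wsp n. phi (\<lambda>x. c * v x) = (\<lambda>x. c * phi v x)"
    and phi_b: "\<forall>i j. 1 \<le> i \<and> i \<le> n \<longrightarrow> phi (bas (Gb, i, j)) = (\<lambda>x. lb j * bas (Gb, i, j + w) x)"
    and phi_c: "\<forall>i j. 1 \<le> i \<and> i \<le> n \<longrightarrow> phi (bas (Gc, i, j)) = (\<lambda>x. mc j * bas (Gc, i, j + w) x)"
    and phi_beta: "\<forall>i j. 1 \<le> i \<and> i \<le> n \<longrightarrow> phi (bas (Gbeta, i, j)) = (\<lambda>x. lbeta j * bas (Gbeta, i, j + w) x)"
    and phi_gamma: "\<forall>i j. 1 \<le> i \<and> i \<le> n \<longrightarrow> phi (bas (Ggamma, i, j)) = (\<lambda>x. mgamma j * bas (Ggamma, i, j + w) x)"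
  shows "\<exists>!a :: (nat \<Rightarrow> complex) \<times> (nat \<Rightarrow> complex).
           (\<forall>r. r > 2 * m + 1 \<longrightarrow> fst a r = 0 \<and> snd a r = 0) \<and>
           (\<forall>v\<in>Wm n m. phi v = (\<lambda>x. \<Sum>r\<le>2 * m + 1.
                fst a r * jder0 (r + w) r v x + snd a r * jder1 (r + w) r v x))"
proof -
  have "\<exists>!a. solves_falling_system m w mc lb (fst a) \<and> solves_falling_system m w mgamma lbeta (snd a)"
    by (intro ex1_pair falling_system_unique_solution)
  then show ?thesis
    unfolding represents_on_Wm_iff[OF n phi_add phi_scale phi_b phi_c phi_beta phi_gamma]
      solves_falling_system_def
    by (simp only: imp_conjR all_conj_distrib conj_ac)
qed

end
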